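(* Let $d=1$, fix $y\in\mathbb{R}$ and measurable $g:\mathbb{R}\to\mathbb{R}$. Let $X,V$ be independent real random variables, $Y=X+V$, where $P_V$ has a Lebesgue density $f_V\in C_0^1(\mathbb{R};\mathbb{R})$ and $\varphi_V(\omega)\neq0$ for Lebesgue-a.e. $\omega$. Assume $\lambda_{g,V,y}(x)=g(x)f_V(y-x)\in\Xi^0(\mathbb{R};\mathbb{C})$ and $\widetilde{\lambda}_{g,V,y}\in L^1(\mathbb{R};\mathbb{C})$. Suppose there are $c_{g,V,y}\in\mathbb{C}$ and measurable $k_{g,V,y}:(0,\infty)\to\mathbb{C}$ with $\int_0^1t|k_{g,V,y}(t)|dt<\infty$, $\int_1^\infty|k_{g,V,y}(t)|dt<\infty$, and \[ \mathcal{Q}_{g,V,y}(\omega)=e^{i\omega y}\Bigl(c_{g,V,y}+\int_0^\infty(1-e^{-i\omega t})k_{g,V,y}(t)\,dt\Bigr)\quad\text{for Lebesgue-a.e. }\omega. \] Then for every $f\in\mathcal{A}_V(\mathbb{R})$, \[ \mathcal{T}_{g,V,y}[f]=c_{g,V,y}f(y)+\int_0^\infty\bigl(f(y)-f(y-t)\bigr)k_{g,V,y}(t)\,dt, \] and in particular, whenever $f_Y(y)>0$, \[ \mathbb{E}[g(X)\mid Y=y]=\frac{1}{f_Y(y)}\Bigl\{c_{g,V,y}f_Y(y)+\int_0^\infty\bigl(f_Y(y)-f_Y(y-t)\bigr)k_{g,V,y}(t)\,dt\Bigr\}. \]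
   Context: $\widetilde\psi(\omega)=\int e^{i\omega x}\psi(x)dx$; $\varphi_V(\omega)=\mathbb{E}[e^{i\omega V}]$. $C_0^1$: $C^1$ functions with the function and derivative vanishing at infinity; $\Xi^0=C_0\cap L^1$. $\mathcal{Q}_{g,V,y}(\omega)=\widetilde{\lambda}_{g,V,y}(\omega)/\varphi_V(-\omega)$ where $\varphi_V(-\omega)\ne0$, and $0$ otherwise. $\mathcal{A}_V(\mathbb{R})=\{f_V*\mu:\mu\text{ finite signed Radon measure}\}$ with $\|f_V*\mu\|_{\mathcal{A}_V}=\|\mu\|_{TV}$; $\mathcal{T}_{g,V,y}$ is the unique continuous linear functional on $\mathcal{A}_V$ with $\mathcal{T}_{g,V,y}[f_V*\mu]=\int\lambda_{g,V,y}\,d\mu$. $f_Y=f_V*P_X$ and $\mathbb{E}[g(X)\mid Y=y]=f_Y(y)^{-1}\int g(x)f_V(y-x)dP_X(x)$. *)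

theory Defs
  imports "HOL-Probability.Probability"
begin

definition fourier :: "(real \<Rightarrow> complex) \<Rightarrow> real \<Rightarrow> complex" where
  "fourier \<psi> \<omega> = (CLINT x|lborel. iexp (\<omega> * x) * \<psi> x)"

definition C0_1 :: "(real \<Rightarrow> real) \<Rightarrow> bool" where
  "C0_1 f \<longleftrightarrow> (\<exists>f'. (\<forall>x. (f has_real_derivative f' x) (at x)) \<and> continuous_on UNIV f'
      \<and> (f \<longlongrightarrow> 0) at_infinity \<and> (f' \<longlongrightarrow> 0) at_infinity)"

definition Xi0 :: "(real \<Rightarrow> complex) \<Rightarrow> bool" where
  "Xi0 \<psi> \<longleftrightarrow> continuous_on UNIV \<psi> \<and> (\<psi> \<longlongrightarrow> 0) at_infinity \<and> integrable lborel \<psi>"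

definition lam :: "(real \<Rightarrow> real) \<Rightarrow> (real \<Rightarrow> real) \<Rightarrow> real \<Rightarrow> real \<Rightarrow> complex" where
  "lam g fV y x = complex_of_real (g x * fV (y - x))"

definition Qfun :: "(real \<Rightarrow> real) \<Rightarrow> (real \<Rightarrow> real) \<Rightarrow> real measure \<Rightarrow> real \<Rightarrow> real \<Rightarrow> complex" where
  "Qfun g fV PV y \<omega> = (if char PV (-\<omega>) \<noteq> 0 then fourier (lam g fV y) \<omega> / char PV (-\<omega>) else 0)"

text \<open>Convolution f_V * mu of f_V with a finite signed measure mu = mu1 - mu2 (Jordan decomposition).\<close>
definition conv_signed :: "(real \<Rightarrow> real) \<Rightarrow> real measure \<Rightarrow> real measure \<Rightarrow> real \<Rightarrow> real" where
  "conv_signed fV \<mu>1 \<mu>2 x = (\<integral>z. fV (x - z) \<partial>\<mu>1) - (\<integral>z. fV (x - z) \<partial>\<mu>2)"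

text \<open>T_{g,V,y}[f_V * mu] = integral of lambda d mu, for mu = mu1 - mu2.\<close>
definition T_functional :: "(real \<Rightarrow> real) \<Rightarrow> (real \<Rightarrow> real) \<Rightarrow> real \<Rightarrow> real measure \<Rightarrow> real measure \<Rightarrow> complex" where
  "T_functional g fV y \<mu>1 \<mu>2 = (CLINT x|\<mu>1. lam g fV y x) - (CLINT x|\<mu>2. lam g fV y x)"

definition fY :: "(real \<Rightarrow> real) \<Rightarrow> real measure \<Rightarrow> real \<Rightarrow> real" where
  "fY fV PX y = (\<integral>x. fV (y - x) \<partial>PX)"

definition cond_exp_at :: "(real \<Rightarrow> real) \<Rightarrow> (real \<Rightarrow> real) \<Rightarrow> real measure \<Rightarrow> real \<Rightarrow> real" where
  "cond_exp_at g fV PX y = inverse (fY fV PX y) * (\<integral>x. g x * fV (y - x) \<partial>PX)"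

end

theory Submission
  imports Defs
begin

(* Multiplied out by \<phi>_V(-\<omega>), and using that the Fourier transform of f_V(y - .) is
   e^(i\<omega>y) \<phi>_V(-\<omega>), the hypothesis on Q says that \<lambda> has the same Fourier transform as
     \<rho>(x) = c f_V(y - x) + \<integral>_0^\<infinity> (f_V(y - x) - f_V(y - x - t)) k(t) dt,
   the factor 1 - e^(-i\<omega>t) being the multiplier of f \<mapsto> f - f(. - t). As \<rho> need not be integrable,
   this is used in the weak form \<integral> \<lambda> \<psi>^ = \<integral> \<rho> \<psi>^ for test functions \<psi> with (2 + |\<omega>|) \<psi>
   integrable, which follows by Fubini from |f_V(a) - f_V(a - t)| \<le> C min(1, t) and
   |1 - e^(-i\<omega>t)| \<le> (2 + |\<omega>|) min(1, t): these bounds are what the integrability conditions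
   on k pay for. Letting \<psi>^ run through a Gaussian approximate identity, continuity of \<lambda> and \<rho>
   gives \<lambda> = \<rho> pointwise. Integrating this identity against a finite measure \<mu> and exchanging
   the integrals once more gives T[f_V * \<mu>] = c f(y) + \<integral>_0^\<infinity> (f(y) - f(y - t)) k(t) dt, where
   f = f_V * \<mu>; for \<mu> = P_X the left-hand side is the numerator of E[g(X) | Y = y]. *)

lemma integrable_real_bound:
  fixes f :: "'a \<Rightarrow> 'b::{banach, second_countable_topology}"
  assumes "integrable M g" and "f \<in> borel_measurable M"
    and bound: "\<And>x. x \<in> space M \<Longrightarrow> norm (f x) \<le> g x"
  shows "integrable M f"
  using assms(1,2)
proof (rule Bochner_Integration.integrable_bound)
  show "AE x in M. norm (f x) \<le> norm (g x)"
    using bound unfolding real_norm_def by (intro AE_I2) (rule order_trans, assumption, rule abs_ge_self)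
qed

lemma integrable_mult_bounded:
  fixes f g :: "'a \<Rightarrow> complex"
  assumes f: "integrable M f" and [measurable]: "g \<in> borel_measurable M"
    and bound: "\<And>x. x \<in> space M \<Longrightarrow> norm (g x) \<le> C"
  shows "integrable M (\<lambda>x. f x * g x)"
proof (rule integrable_real_bound)
  show "integrable M (\<lambda>x. norm (f x) * C)"
    using f by auto
  show "norm (f x * g x) \<le> norm (f x) * C" if "x \<in> space M" for x
    using mult_left_mono[OF bound[OF that] norm_ge_zero] by (simp add: norm_mult)
qed (use f in auto)

lemma (in pair_sigma_finite) integrable_product_bound:
  fixes F :: "_ \<Rightarrow> 'z::{banach, second_countable_topology}"
  assumes F: "F \<in> borel_measurable (M1 \<Otimes>\<^sub>M M2)" and a: "integrable M1 a" and b: "integrable M2 b"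
    and bound: "\<And>x y. x \<in> space M1 \<Longrightarrow> y \<in> space M2 \<Longrightarrow> norm (F (x, y)) \<le> a x * b y"
  shows "integrable (M1 \<Otimes>\<^sub>M M2) F"
proof -
  have [measurable]: "a \<in> borel_measurable M1" "b \<in> borel_measurable M2"
    using a b by auto
  have "integrable (M1 \<Otimes>\<^sub>M M2) (\<lambda>p. a (fst p) * b (snd p))"
    by (rule Fubini_integrable) (auto simp: abs_mult integrable_abs[OF a] b)
  then show ?thesis
    by (rule integrable_real_bound[OF _ F]) (use bound in \<open>auto simp: space_pair_measure\<close>)
qed

lemma AE_lborel_uminus:
  assumes "AE x in lborel. P (x::real)"
  shows "AE x in lborel. P (- x)"
proof -
  from assms obtain N where N: "{x \<in> space lborel. \<not> P x} \<subseteq> N" "N \<in> null_sets lborel"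
    by (metis AE_E null_setsI)
  have "emeasure lborel (uminus -` N \<inter> space lborel) = emeasure (distr lborel borel uminus) N"
    using N(2) by (subst emeasure_distr) auto
  also have "\<dots> = 0"
    using N(2) by (simp add: lborel_distr_uminus null_setsD1)
  moreover have "uminus -` N \<inter> space borel \<in> sets borel"
    using N(2) by (intro measurable_sets[of uminus borel borel N]) (auto dest: null_setsD2)
  ultimately have "uminus -` N \<inter> space lborel \<in> null_sets lborel"
    by (auto intro!: null_setsI)
  then show ?thesis
    by (rule AE_I') (use N(1) in auto)
qed

lemma bounded_if_tendsto_0_at_infinity:
  fixes f :: "real \<Rightarrow> 'a::real_normed_vector"
  assumes cont: "continuous_on UNIV f" and lim: "(f \<longlongrightarrow> 0) at_infinity"
  obtains B where "\<And>x. norm (f x) \<le> B"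
proof -
  obtain R where R: "\<And>x. norm x \<ge> R \<Longrightarrow> norm (f x) < 1"
    using tendstoD[OF lim, of 1] unfolding eventually_at_infinity by auto
  have "compact (f ` cball 0 R)"
    by (rule compact_continuous_image) (auto intro: continuous_on_subset[OF cont])
  then obtain C where "\<forall>x\<in>cball 0 R. norm (f x) \<le> C"
    by (auto dest!: compact_imp_bounded simp: bounded_iff)
  then have C: "\<And>x. norm x \<le> R \<Longrightarrow> norm (f x) \<le> C"
    by simp
  have "norm (f x) \<le> max C 1" for x
    using R[of x] C[of x] by (cases "norm x \<ge> R") auto
  then show ?thesis by (rule that)
qed

lemma increment_le_min:
  fixes f :: "real \<Rightarrow> 'a::real_normed_vector"
  assumes bound: "\<And>x. norm (f x) \<le> B" and lipschitz: "\<And>a b. norm (f a - f b) \<le> L * \<bar>a - b\<bar>"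
    and "t \<ge> 0"
  shows "norm (f a - f (a - t)) \<le> (2 * B + L) * min 1 t"
proof (cases "t \<le> 1")
  case True
  have "0 \<le> B" using bound[of 0] norm_ge_zero[of "f 0"] by linarith
  have "norm (f a - f (a - t)) \<le> L * t"
    using lipschitz[of a "a - t"] \<open>t \<ge> 0\<close> by simp
  also have "\<dots> \<le> (2 * B + L) * t"
    using \<open>0 \<le> B\<close> \<open>t \<ge> 0\<close> by (simp add: algebra_simps)
  finally show ?thesis using True by simp
next
  case False
  have "0 \<le> L" using lipschitz[of 1 0] norm_ge_zero[of "f 1 - f 0"] by (simp del: norm_ge_zero)
  have "norm (f a - f (a - t)) \<le> 2 * B"
    using norm_triangle_ineq4[of "f a" "f (a - t)"] bound[of a] bound[of "a - t"] by simp
  then show ?thesis using False \<open>0 \<le> L\<close> by simp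
qed

lemma iexp_diff: "iexp (x - y) = iexp x * iexp (- y)"
  by (simp add: exp_add[symmetric] algebra_simps)

lemma norm_one_minus_iexp_le_min:
  assumes "t \<ge> 0"
  shows "norm (1 - iexp (- (\<omega> * t))) \<le> (2 + \<bar>\<omega>\<bar>) * min 1 t"
proof -
  have le_abs: "norm (1 - iexp x) \<le> \<bar>x\<bar>" for x
    using iexp_approx1[of x 0] by (simp add: norm_minus_commute)
  have le_2: "norm (1 - iexp x) \<le> 2" for x
    using norm_triangle_ineq4[of 1 "iexp x"] by simp
  show ?thesis
  proof (cases "t \<le> 1")
    case True
    have "norm (1 - iexp (- (\<omega> * t))) \<le> \<bar>\<omega>\<bar> * t"
      using le_abs[of "- (\<omega> * t)"] assms by (simp add: abs_mult)
    also have "\<dots> \<le> (2 + \<bar>\<omega>\<bar>) * t"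
      using assms by (simp add: algebra_simps)
    finally show ?thesis using True by simp
  next
    case False
    then show ?thesis using le_2[of "- (\<omega> * t)"] by simp
  qed
qed

section \<open>Fourier transform\<close>

lemma borel_measurable_fourier[measurable]:
  assumes [measurable]: "f \<in> borel_measurable borel"
  shows "fourier f \<in> borel_measurable borel"
  unfolding fourier_def[abs_def] by measurable

lemma norm_fourier_le: "norm (fourier f \<omega>) \<le> (\<integral>x. norm (f x) \<partial>lborel)"
proof -
  have "norm (fourier f \<omega>) \<le> (\<integral>x. norm (iexp (\<omega> * x) * f x) \<partial>lborel)"
    unfolding fourier_def by (rule integral_norm_bound)
  then show ?thesis by (simp add: norm_mult)
qed

lemma fourier_reflect_shift: "fourier (\<lambda>z. f (a - z)) \<omega> = iexp (\<omega> * a) * fourier f (- \<omega>)"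
proof -
  have "fourier (\<lambda>z. f (a - z)) \<omega>
      = \<bar>-1\<bar> *\<^sub>R (\<integral>u. iexp (\<omega> * (a + -1 * u)) * f (a - (a + -1 * u)) \<partial>lborel)"
    unfolding fourier_def by (rule lborel_integral_real_affine) simp
  also have "\<dots> = (\<integral>u. iexp (\<omega> * a) * (iexp (- \<omega> * u) * f u) \<partial>lborel)"
    using iexp_diff[of "\<omega> * a" "\<omega> * u" for u] by (simp add: right_diff_distrib mult.assoc)
  also have "\<dots> = iexp (\<omega> * a) * fourier f (- \<omega>)"
    unfolding fourier_def by (rule integral_mult_right_zero)
  finally show ?thesis .
qed

lemma fourier_shift: "fourier (\<lambda>z. f (z + t)) \<omega> = iexp (- (\<omega> * t)) * fourier f \<omega>"
proof -
  have "fourier (\<lambda>z. f (z + t)) \<omega> = \<bar>1\<bar> *\<^sub>R (\<integral>u. iexp (\<omega> * (- t + 1 * u)) * f (- t + 1 * u + t) \<partial>lborel)"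
    unfolding fourier_def by (rule lborel_integral_real_affine) simp
  also have "\<dots> = (\<integral>u. iexp (- (\<omega> * t)) * (iexp (\<omega> * u) * f u) \<partial>lborel)"
    using iexp_diff[of "\<omega> * u" "\<omega> * t" for u] by (simp add: algebra_simps)
  also have "\<dots> = iexp (- (\<omega> * t)) * fourier f \<omega>"
    unfolding fourier_def by (rule integral_mult_right_zero)
  finally show ?thesis .
qed

lemma fourier_multiplication:
  assumes h: "integrable lborel h" and \<Psi>: "integrable lborel \<Psi>"
  shows "(\<integral>z. h z * fourier \<Psi> z \<partial>lborel) = (\<integral>\<omega>. fourier h \<omega> * \<Psi> \<omega> \<partial>lborel)"
proof -
  have [measurable]: "h \<in> borel_measurable borel" "\<Psi> \<in> borel_measurable borel"
    using h \<Psi> by auto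
  have "integrable (lborel \<Otimes>\<^sub>M lborel) (\<lambda>(z, \<omega>). h z * (iexp (\<omega> * z) * \<Psi> \<omega>))"
    by (rule lborel_pair.integrable_product_bound[where a="\<lambda>z. norm (h z)" and b="\<lambda>\<omega>. norm (\<Psi> \<omega>)"])
       (auto simp: norm_mult h \<Psi>)
  from lborel_pair.Fubini_integral[OF this]
  have "(\<integral>z. (\<integral>\<omega>. h z * (iexp (\<omega> * z) * \<Psi> \<omega>) \<partial>lborel) \<partial>lborel)
      = (\<integral>\<omega>. (\<integral>z. h z * (iexp (\<omega> * z) * \<Psi> \<omega>) \<partial>lborel) \<partial>lborel)"
    by simp
  then show ?thesis
    by (simp add: fourier_def mult.commute[of \<omega> z for \<omega> z] mult.left_commute[of "h z" for z]
             flip: integral_mult_left_zero integral_mult_right_zero)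
qed

section \<open>A Gaussian approximate identity\<close>

definition gauss_kernel :: "real \<Rightarrow> real \<Rightarrow> real \<Rightarrow> real" where
  "gauss_kernel r z0 z = r * std_normal_density (r * (z - z0))"

definition gauss_test :: "real \<Rightarrow> real \<Rightarrow> real \<Rightarrow> complex" where
  "gauss_test r z0 \<omega> = complex_of_real (std_normal_density (\<omega> / r) / sqrt (2 * pi)) * iexp (- (\<omega> * z0))"

lemma integral_std_normal_iexp:
  "(\<integral>u. std_normal_density u *\<^sub>R iexp (t * u) \<partial>lborel) = complex_of_real (exp (- (t\<^sup>2) / 2))"
proof -
  have "char std_normal_distribution t = (\<integral>u. std_normal_density u *\<^sub>R iexp (t * u) \<partial>lborel)"
    unfolding char_def by (subst integral_density) (auto simp: normal_density_nonneg)
  then show ?thesis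
    by (simp add: char_std_normal_distribution)
qed

lemma fourier_gauss_test:
  assumes r: "r > 0"
  shows "fourier (gauss_test r z0) z = complex_of_real (gauss_kernel r z0 z)"
proof -
  have "fourier (gauss_test r z0) z = \<bar>r\<bar> *\<^sub>R (\<integral>u. iexp (z * (0 + r * u)) * gauss_test r z0 (0 + r * u) \<partial>lborel)"
    unfolding fourier_def using r by (intro lborel_integral_real_affine) simp
  also have "\<dots> = r *\<^sub>R (\<integral>u. (1 / sqrt (2 * pi)) *\<^sub>R (std_normal_density u *\<^sub>R iexp ((r * (z - z0)) * u)) \<partial>lborel)"
    using r iexp_diff[of "z * (r * u)" "r * u * z0" for u]
    by (simp add: gauss_test_def scaleR_conv_of_real algebra_simps)
  also have "\<dots> = r *\<^sub>R ((1 / sqrt (2 * pi)) *\<^sub>R complex_of_real (exp (- ((r * (z - z0))\<^sup>2) / 2)))"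
    by (simp only: integral_scaleR_right integral_std_normal_iexp)
  also have "\<dots> = complex_of_real (gauss_kernel r z0 z)"
    by (simp add: gauss_kernel_def normal_density_def scaleR_conv_of_real power2_eq_square algebra_simps)
  finally show ?thesis .
qed

lemma integrable_gauss_kernel: "integrable lborel (gauss_kernel r z0)"
proof (cases "r = 0")
  case False
  then have "integrable lborel (\<lambda>z. std_normal_density (- r * z0 + r * z))"
    by (intro lborel_integrable_real_affine) auto
  then show ?thesis
    unfolding gauss_kernel_def by (intro integrable_mult_right) (simp add: algebra_simps)
qed (simp add: gauss_kernel_def[abs_def])

lemma integrable_gauss_test:
  assumes r: "r > 0"
  shows "integrable lborel (gauss_test r z0)"
    and "integrable lborel (\<lambda>\<omega>. (2 + \<bar>\<omega>\<bar>) * norm (gauss_test r z0 \<omega>))"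
proof -
  have norm_eq: "norm (gauss_test r z0 \<omega>) = std_normal_density (\<omega> / r) / sqrt (2 * pi)" for \<omega>
    by (simp add: gauss_test_def norm_mult norm_divide)
  have [measurable]: "gauss_test r z0 \<in> borel_measurable borel"
    unfolding gauss_test_def[abs_def] normal_density_def by measurable
  have density: "integrable lborel (\<lambda>\<omega>. std_normal_density (0 + (1 / r) * \<omega>))"
    using r by (intro lborel_integrable_real_affine) auto
  have "integrable lborel (\<lambda>\<omega>. (\<lambda>x. std_normal_density x * \<bar>x\<bar> ^ 1) (0 + (1 / r) * \<omega>))"
    using r by (intro lborel_integrable_real_affine integrable_std_normal_moment_abs) auto
  then have "integrable lborel (\<lambda>\<omega>. r * (std_normal_density (\<omega> / r) * \<bar>\<omega> / r\<bar>))"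
    by (intro integrable_mult_right) simp
  then have moment: "integrable lborel (\<lambda>\<omega>. \<bar>\<omega>\<bar> * std_normal_density (\<omega> / r))"
    using r by (simp add: abs_div mult.commute)
  show "integrable lborel (gauss_test r z0)"
    by (rule Bochner_Integration.integrable_bound[OF integrable_divide[OF density, of "sqrt (2 * pi)"]])
       (auto simp: norm_eq)
  have "integrable lborel (\<lambda>\<omega>. (2 / sqrt (2 * pi)) * std_normal_density (\<omega> / r)
      + (1 / sqrt (2 * pi)) * (\<bar>\<omega>\<bar> * std_normal_density (\<omega> / r)))"
    using density moment by auto
  then show "integrable lborel (\<lambda>\<omega>. (2 + \<bar>\<omega>\<bar>) * norm (gauss_test r z0 \<omega>))"
    by (simp add: norm_eq field_simps)
qed

lemma gauss_kernel_approx_identity: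
  fixes h :: "real \<Rightarrow> complex"
  assumes [measurable]: "h \<in> borel_measurable borel" and bound: "\<And>x. norm (h x) \<le> B"
    and cont: "isCont h z0"
  shows "(\<lambda>n. \<integral>z. h z * complex_of_real (gauss_kernel (Suc n) z0 z) \<partial>lborel) \<longlonglongrightarrow> h z0"
proof -
  have rescale: "(\<integral>z. h z * complex_of_real (gauss_kernel r z0 z) \<partial>lborel)
      = (\<integral>w. h (z0 + w / r) * complex_of_real (std_normal_density w) \<partial>lborel)" if r: "r > 0" for r
  proof -
    have "(\<integral>z. h z * complex_of_real (gauss_kernel r z0 z) \<partial>lborel)
      = \<bar>1 / r\<bar> *\<^sub>R (\<integral>w. h (z0 + 1 / r * w) * complex_of_real (gauss_kernel r z0 (z0 + 1 / r * w)) \<partial>lborel)"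
      using r by (intro lborel_integral_real_affine) simp
    also have "\<dots> = (\<integral>w. h (z0 + w / r) * complex_of_real (std_normal_density w) \<partial>lborel)"
      using r by (simp add: gauss_kernel_def scaleR_conv_of_real field_simps flip: integral_mult_right_zero)
    finally show ?thesis .
  qed
  have "(\<lambda>n. \<integral>w. h (z0 + w / Suc n) * complex_of_real (std_normal_density w) \<partial>lborel)
      \<longlonglongrightarrow> (\<integral>w. h z0 * complex_of_real (std_normal_density w) \<partial>lborel)"
  proof (rule integral_dominated_convergence[where w="\<lambda>w. B * std_normal_density w"])
    show "AE w in lborel. (\<lambda>n. h (z0 + w / Suc n) * complex_of_real (std_normal_density w))
        \<longlonglongrightarrow> h z0 * complex_of_real (std_normal_density w)"
    proof (intro AE_I2 tendsto_mult tendsto_const)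
      fix w :: real
      have "(\<lambda>n. z0 + w / Suc n) \<longlonglongrightarrow> z0 + 0"
        by (intro tendsto_add tendsto_const LIMSEQ_Suc[OF lim_const_over_n])
      then show "(\<lambda>n. h (z0 + w / Suc n)) \<longlonglongrightarrow> h z0"
        using isCont_tendsto_compose[OF cont] by simp
    qed
    show "AE w in lborel. norm (h (z0 + w / Suc n) * complex_of_real (std_normal_density w))
        \<le> B * std_normal_density w" for n
      by (intro AE_I2) (simp add: norm_mult mult_right_mono bound)
  qed auto
  then show ?thesis
    by (simp add: rescale)
qed

definition levy_operator :: "(real \<Rightarrow> real) \<Rightarrow> complex \<Rightarrow> (real \<Rightarrow> complex) \<Rightarrow> real \<Rightarrow> complex" where
  "levy_operator f c k a = c * complex_of_real (f a) + (\<integral>t. complex_of_real (f a - f (a - t)) * k t \<partial>lborel)"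

definition levy_symbol :: "(real \<Rightarrow> complex) \<Rightarrow> real \<Rightarrow> complex" where
  "levy_symbol k \<omega> = (\<integral>t. (1 - iexp (- (\<omega> * t))) * k t \<partial>lborel)"

lemma levy_operator_restrict:
  "levy_operator f c (\<lambda>t. indicator {0<..} t *\<^sub>R k t) a
    = c * complex_of_real (f a) + (LINT t:{0<..}|lborel. complex_of_real (f a - f (a - t)) * k t)"
  unfolding levy_operator_def set_lebesgue_integral_def by (simp add: mult.left_commute)

lemma levy_operator_diff:
  assumes "integrable lborel (\<lambda>t. complex_of_real (f a - f (a - t)) * k t)"
    and "integrable lborel (\<lambda>t. complex_of_real (g a - g (a - t)) * k t)"
  shows "levy_operator (\<lambda>x. f x - g x) c k a = levy_operator f c k a - levy_operator g c k a"
proof -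
  have "(\<integral>t. complex_of_real ((f a - g a) - (f (a - t) - g (a - t))) * k t \<partial>lborel)
      = (\<integral>t. complex_of_real (f a - f (a - t)) * k t - complex_of_real (g a - g (a - t)) * k t \<partial>lborel)"
    by (simp add: algebra_simps)
  also have "\<dots> = (\<integral>t. complex_of_real (f a - f (a - t)) * k t \<partial>lborel)
      - (\<integral>t. complex_of_real (g a - g (a - t)) * k t \<partial>lborel)"
    using assms by (rule Bochner_Integration.integral_diff)
  finally show ?thesis
    unfolding levy_operator_def by (simp add: algebra_simps)
qed

lemma norm_levy_symbol_le:
  assumes [measurable]: "k \<in> borel_measurable borel"
    and k_nonpos: "\<And>t. t \<le> 0 \<Longrightarrow> k t = 0" and k: "integrable lborel (\<lambda>t. min 1 t * norm (k t))"
  shows "norm (levy_symbol k \<omega>) \<le> (2 + \<bar>\<omega>\<bar>) * (\<integral>t. min 1 t * norm (k t) \<partial>lborel)"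
proof -
  have bound: "norm ((1 - iexp (- (\<omega> * t))) * k t) \<le> (2 + \<bar>\<omega>\<bar>) * (min 1 t * norm (k t))" for t
    using norm_one_minus_iexp_le_min[of t \<omega>] k_nonpos[of t]
    by (cases "t \<le> 0") (auto simp: norm_mult mult.assoc[symmetric] intro!: mult_right_mono)
  have "integrable lborel (\<lambda>t. (1 - iexp (- (\<omega> * t))) * k t)"
    by (rule integrable_real_bound[OF integrable_mult_right[OF k] _ bound]) measurable
  then have "norm (levy_symbol k \<omega>) \<le> (\<integral>t. (2 + \<bar>\<omega>\<bar>) * (min 1 t * norm (k t)) \<partial>lborel)"
    unfolding levy_symbol_def using k bound by (intro Bochner_Integration.integral_norm_bound_integral) auto
  then show ?thesis
    by simp
qed

section \<open>Identifying \<lambda> with a Levy-type operator\<close>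

(* h stands for \<lambda>_{g,V,y}; fourier_h is the hypothesis on Q multiplied by \<phi>_V(-\<omega>)
   (see fourier_lam_eq_from_Qfun). *)
locale levy_fourier_identity =
  fixes fV :: "real \<Rightarrow> real" and B L :: real and k :: "real \<Rightarrow> complex"
    and h :: "real \<Rightarrow> complex" and y :: real and c :: complex
  assumes fV_bounded: "\<And>x. \<bar>fV x\<bar> \<le> B"
    and fV_lipschitz: "\<And>a b. \<bar>fV a - fV b\<bar> \<le> L * \<bar>a - b\<bar>"
    and fV_integrable: "integrable lborel fV"
    and k_measurable[measurable]: "k \<in> borel_measurable borel"
    and k_nonpos: "\<And>t. t \<le> 0 \<Longrightarrow> k t = 0"
    and k_integrable: "integrable lborel (\<lambda>t. min 1 t * norm (k t))"
    and h_Xi0: "Xi0 h"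
    and fourier_h: "AE \<omega> in lborel.
          fourier h \<omega> = fourier (\<lambda>z. complex_of_real (fV (y - z))) \<omega> * (c + levy_symbol k \<omega>)"
begin

lemma fV_continuous: "continuous_on UNIV fV"
proof (rule lipschitz_on_continuous_on)
  have "0 \<le> L" using fV_lipschitz[of 1 0] by simp
  then show "L-lipschitz_on UNIV fV"
    using fV_lipschitz by (simp add: lipschitz_on_def dist_real_def)
qed

lemma fV_measurable[measurable]: "fV \<in> borel_measurable borel"
  using fV_continuous by (rule borel_measurable_continuous_onI)

lemma h_continuous: "continuous_on UNIV h" and h_integrable: "integrable lborel h"
  using h_Xi0 by (simp_all add: Xi0_def)

lemma h_measurable[measurable]: "h \<in> borel_measurable borel"
  using h_continuous by (rule borel_measurable_continuous_onI)

lemma integrable_fV_reflect: "integrable lborel (\<lambda>z. fV (a - z))"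
  using lborel_integrable_real_affine[OF fV_integrable, of "-1" a] by simp

lemma levy_integrand_le:
  "norm (complex_of_real (fV a - fV (a - t)) * k t) \<le> (2 * B + L) * (min 1 t * norm (k t))"
proof (cases "t \<le> 0")
  case False
  then have "\<bar>fV a - fV (a - t)\<bar> \<le> (2 * B + L) * min 1 t"
    using increment_le_min[of fV B L t a] fV_bounded fV_lipschitz by simp
  then show ?thesis
    by (simp add: norm_mult mult.assoc[symmetric] mult_right_mono del: of_real_diff)
qed (simp add: k_nonpos)

lemma integrable_levy_integrand: "integrable lborel (\<lambda>t. complex_of_real (fV a - fV (a - t)) * k t)"
  by (rule integrable_real_bound[OF integrable_mult_right[OF k_integrable] _ levy_integrand_le]) measurable

lemma norm_levy_integral_le:
  "norm (\<integral>t. complex_of_real (fV a - fV (a - t)) * k t \<partial>lborel)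
    \<le> (2 * B + L) * (\<integral>t. min 1 t * norm (k t) \<partial>lborel)"
proof -
  have "norm (\<integral>t. complex_of_real (fV a - fV (a - t)) * k t \<partial>lborel)
      \<le> (\<integral>t. (2 * B + L) * (min 1 t * norm (k t)) \<partial>lborel)"
    using integrable_levy_integrand k_integrable levy_integrand_le
    by (intro Bochner_Integration.integral_norm_bound_integral) auto
  then show ?thesis
    by simp
qed

lemma norm_levy_operator_le:
  "norm (levy_operator fV c k a) \<le> norm c * B + (2 * B + L) * (\<integral>t. min 1 t * norm (k t) \<partial>lborel)"
proof -
  note norm_levy_integral_le[of a]
  moreover have "norm (c * complex_of_real (fV a)) \<le> norm c * B"
    using fV_bounded[of a] by (simp add: norm_mult mult_left_mono)
  ultimately show ?thesis
    unfolding levy_operator_def by (intro norm_triangle_le) linarith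
qed

lemma continuous_levy_operator: "continuous_on UNIV (levy_operator fV c k)"
proof (intro continuous_at_imp_continuous_on ballI continuous_at_sequentiallyI)
  fix a :: real and u :: "nat \<Rightarrow> real" assume u: "u \<longlonglongrightarrow> a"
  have fV_u: "(\<lambda>n. fV (u n - t)) \<longlonglongrightarrow> fV (a - t)" for t
    using fV_continuous u by (intro continuous_on_tendsto_compose[of UNIV fV] tendsto_intros) auto
  have "(\<lambda>n. \<integral>t. complex_of_real (fV (u n) - fV (u n - t)) * k t \<partial>lborel)
      \<longlonglongrightarrow> (\<integral>t. complex_of_real (fV a - fV (a - t)) * k t \<partial>lborel)"
  proof (rule integral_dominated_convergence[where w="\<lambda>t. (2 * B + L) * (min 1 t * norm (k t))"])
    show "AE t in lborel. (\<lambda>n. complex_of_real (fV (u n) - fV (u n - t)) * k t)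
        \<longlonglongrightarrow> complex_of_real (fV a - fV (a - t)) * k t"
      using fV_u[of t for t] fV_u[of 0] by (intro AE_I2 tendsto_intros) auto
  qed (use k_integrable levy_integrand_le in auto)
  moreover have "(\<lambda>n. c * complex_of_real (fV (u n))) \<longlonglongrightarrow> c * complex_of_real (fV a)"
    using fV_u[of 0] by (intro tendsto_intros) simp
  ultimately show "(\<lambda>n. levy_operator fV c k (u n)) \<longlonglongrightarrow> levy_operator fV c k a"
    unfolding levy_operator_def by (intro tendsto_add)
qed

lemma levy_operator_measurable[measurable]: "levy_operator fV c k \<in> borel_measurable borel"
  using continuous_levy_operator by (rule borel_measurable_continuous_onI)

lemma integral_fV_reflect_fourier:
  assumes "integrable lborel \<Psi>"
  shows "(\<integral>z. complex_of_real (fV (a - z)) * fourier \<Psi> z \<partial>lborel)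
       = (\<integral>\<omega>. fourier (\<lambda>z. complex_of_real (fV (a - z))) \<omega> * \<Psi> \<omega> \<partial>lborel)"
  using integrable_of_real[OF integrable_fV_reflect] assms by (rule fourier_multiplication)

lemma integrable_fV_reflect_mult_fourier:
  assumes "integrable lborel \<Psi>"
  shows "integrable lborel (\<lambda>z. complex_of_real (fV (a - z)) * fourier \<Psi> z)"
  using integrable_of_real[OF integrable_fV_reflect] _ norm_fourier_le
  by (rule integrable_mult_bounded) (use assms in auto)

lemma integrable_fourier_fV_reflect_mult:
  assumes "integrable lborel \<Psi>"
  shows "integrable lborel (\<lambda>\<omega>. \<Psi> \<omega> * fourier (\<lambda>z. complex_of_real (fV (a - z))) \<omega>)"
  using assms _ norm_fourier_le by (rule integrable_mult_bounded) auto

lemma integral_levy_increment_fourier: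
  assumes \<Psi>: "integrable lborel \<Psi>"
  shows "(\<integral>z. complex_of_real (fV (y - z) - fV (y - z - t)) * fourier \<Psi> z \<partial>lborel)
       = (\<integral>\<omega>. fourier (\<lambda>z. complex_of_real (fV (y - z))) \<omega> * (1 - iexp (- (\<omega> * t))) * \<Psi> \<omega> \<partial>lborel)"
proof -
  have shift: "fourier (\<lambda>z. complex_of_real (fV (y - t - z))) \<omega>
      = iexp (- (\<omega> * t)) * fourier (\<lambda>z. complex_of_real (fV (y - z))) \<omega>" for \<omega>
  proof -
    have "(\<lambda>z. complex_of_real (fV (y - (z + t)))) = (\<lambda>z. complex_of_real (fV (y - t - z)))"
      by (simp add: algebra_simps)
    then show ?thesis
      using fourier_shift[of "\<lambda>z. complex_of_real (fV (y - z))" t \<omega>] by simp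
  qed
  have "(\<integral>z. complex_of_real (fV (y - z) - fV (y - z - t)) * fourier \<Psi> z \<partial>lborel)
      = (\<integral>z. complex_of_real (fV (y - z)) * fourier \<Psi> z - complex_of_real (fV (y - t - z)) * fourier \<Psi> z \<partial>lborel)"
    by (simp add: algebra_simps)
  also have "\<dots> = (\<integral>\<omega>. fourier (\<lambda>z. complex_of_real (fV (y - z))) \<omega> * \<Psi> \<omega> \<partial>lborel)
      - (\<integral>\<omega>. fourier (\<lambda>z. complex_of_real (fV (y - t - z))) \<omega> * \<Psi> \<omega> \<partial>lborel)"
    using integrable_fV_reflect_mult_fourier[OF \<Psi>]
    by (simp add: Bochner_Integration.integral_diff integral_fV_reflect_fourier[OF \<Psi>])
  also have "\<dots> = (\<integral>\<omega>. fourier (\<lambda>z. complex_of_real (fV (y - z))) \<omega> * \<Psi> \<omega>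
      - fourier (\<lambda>z. complex_of_real (fV (y - t - z))) \<omega> * \<Psi> \<omega> \<partial>lborel)"
    using integrable_fourier_fV_reflect_mult[OF \<Psi>]
    by (simp add: Bochner_Integration.integral_diff mult.commute)
  also have "\<dots> = (\<integral>\<omega>. fourier (\<lambda>z. complex_of_real (fV (y - z))) \<omega> * (1 - iexp (- (\<omega> * t))) * \<Psi> \<omega> \<partial>lborel)"
    unfolding shift by (simp add: algebra_simps)
  finally show ?thesis .
qed

lemma integrable_levy_integrand_fourier_product:
  assumes \<Psi>_hat: "integrable lborel (fourier \<Psi>)"
  shows "integrable (lborel \<Otimes>\<^sub>M lborel)
      (\<lambda>(z, t). complex_of_real (fV (y - z) - fV (y - z - t)) * k t * fourier \<Psi> z)"
proof -
  have [measurable]: "fourier \<Psi> \<in> borel_measurable borel"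
    using \<Psi>_hat by auto
  show ?thesis
    by (rule lborel_pair.integrable_product_bound[where a="\<lambda>z. norm (fourier \<Psi> z)"
          and b="\<lambda>t. (2 * B + L) * (min 1 t * norm (k t))"])
       (use \<Psi>_hat k_integrable levy_integrand_le in \<open>auto simp: norm_mult[of _ "fourier \<Psi> _"]
          mult.commute[of "norm (fourier \<Psi> _)"] intro: mult_right_mono\<close>)
qed

lemma integrable_levy_symbol_integrand_product:
  assumes \<Psi>: "integrable lborel \<Psi>" and \<Psi>_weighted: "integrable lborel (\<lambda>\<omega>. (2 + \<bar>\<omega>\<bar>) * norm (\<Psi> \<omega>))"
  shows "integrable (lborel \<Otimes>\<^sub>M lborel) (\<lambda>(t, \<omega>).
      k t * (fourier (\<lambda>z. complex_of_real (fV (y - z))) \<omega> * (1 - iexp (- (\<omega> * t))) * \<Psi> \<omega>))"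
proof -
  define F where "F = fourier (\<lambda>z. complex_of_real (fV (y - z)))"
  define N where "N = (\<integral>z. norm (complex_of_real (fV (y - z))) \<partial>lborel)"
  have [measurable]: "\<Psi> \<in> borel_measurable borel" "F \<in> borel_measurable borel"
    using \<Psi> unfolding F_def by auto
  have F_le: "norm (F \<omega>) \<le> N" for \<omega>
    unfolding F_def N_def by (rule norm_fourier_le)
  have bound: "norm (k t * (F \<omega> * (1 - iexp (- (\<omega> * t))) * \<Psi> \<omega>))
      \<le> min 1 t * norm (k t) * (N * ((2 + \<bar>\<omega>\<bar>) * norm (\<Psi> \<omega>)))" for t \<omega>
  proof (cases "t \<le> 0")
    case False
    have "norm (F \<omega>) * norm (1 - iexp (- (\<omega> * t))) \<le> N * ((2 + \<bar>\<omega>\<bar>) * min 1 t)"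
      using F_le[of \<omega>] norm_one_minus_iexp_le_min[of t \<omega>] False
      by (intro mult_mono) (auto intro: order_trans[OF norm_ge_zero F_le])
    then have "norm (k t) * (norm (F \<omega>) * norm (1 - iexp (- (\<omega> * t))) * norm (\<Psi> \<omega>))
        \<le> norm (k t) * (N * ((2 + \<bar>\<omega>\<bar>) * min 1 t) * norm (\<Psi> \<omega>))"
      by (intro mult_left_mono mult_right_mono) auto
    then show ?thesis
      by (simp add: norm_mult mult_ac)
  qed (simp add: k_nonpos)
  have "integrable (lborel \<Otimes>\<^sub>M lborel) (\<lambda>(t, \<omega>). k t * (F \<omega> * (1 - iexp (- (\<omega> * t))) * \<Psi> \<omega>))"
    by (rule lborel_pair.integrable_product_bound[where a="\<lambda>t. min 1 t * norm (k t)"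
          and b="\<lambda>\<omega>. N * ((2 + \<bar>\<omega>\<bar>) * norm (\<Psi> \<omega>))"])
       (use k_integrable \<Psi>_weighted bound in auto)
  then show ?thesis
    unfolding F_def .
qed

lemma integral_levy_part_fourier:
  assumes \<Psi>: "integrable lborel \<Psi>" and \<Psi>_weighted: "integrable lborel (\<lambda>\<omega>. (2 + \<bar>\<omega>\<bar>) * norm (\<Psi> \<omega>))"
    and \<Psi>_hat: "integrable lborel (fourier \<Psi>)"
  shows "(\<integral>z. (\<integral>t. complex_of_real (fV (y - z) - fV (y - z - t)) * k t \<partial>lborel) * fourier \<Psi> z \<partial>lborel)
       = (\<integral>\<omega>. fourier (\<lambda>z. complex_of_real (fV (y - z))) \<omega> * levy_symbol k \<omega> * \<Psi> \<omega> \<partial>lborel)"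
proof -
  define F where "F = fourier (\<lambda>z. complex_of_real (fV (y - z)))"
  note Fubini_zt = integrable_levy_integrand_fourier_product[OF \<Psi>_hat]
  note Fubini_t\<omega> = integrable_levy_symbol_integrand_product[OF \<Psi> \<Psi>_weighted, folded F_def]
  have "(\<integral>z. (\<integral>t. complex_of_real (fV (y - z) - fV (y - z - t)) * k t \<partial>lborel) * fourier \<Psi> z \<partial>lborel)
      = (\<integral>z. (\<integral>t. complex_of_real (fV (y - z) - fV (y - z - t)) * k t * fourier \<Psi> z \<partial>lborel) \<partial>lborel)"
    by (simp only: integral_mult_left_zero)
  also have "\<dots> = (\<integral>t. (\<integral>z. complex_of_real (fV (y - z) - fV (y - z - t)) * k t * fourier \<Psi> z \<partial>lborel) \<partial>lborel)"
    using lborel_pair.Fubini_integral[OF Fubini_zt] by simp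
  also have "\<dots> = (\<integral>t. k t * (\<integral>\<omega>. F \<omega> * (1 - iexp (- (\<omega> * t))) * \<Psi> \<omega> \<partial>lborel) \<partial>lborel)"
  proof (rule Bochner_Integration.integral_cong[OF refl])
    fix t
    have "(\<integral>z. complex_of_real (fV (y - z) - fV (y - z - t)) * k t * fourier \<Psi> z \<partial>lborel)
        = (\<integral>z. complex_of_real (fV (y - z) - fV (y - z - t)) * fourier \<Psi> z * k t \<partial>lborel)"
      by (simp add: mult_ac)
    also have "\<dots> = (\<integral>z. complex_of_real (fV (y - z) - fV (y - z - t)) * fourier \<Psi> z \<partial>lborel) * k t"
      by (rule integral_mult_left_zero)
    also have "\<dots> = (\<integral>\<omega>. F \<omega> * (1 - iexp (- (\<omega> * t))) * \<Psi> \<omega> \<partial>lborel) * k t"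
      by (simp only: integral_levy_increment_fourier[OF \<Psi>] F_def)
    finally show "(\<integral>z. complex_of_real (fV (y - z) - fV (y - z - t)) * k t * fourier \<Psi> z \<partial>lborel)
        = k t * (\<integral>\<omega>. F \<omega> * (1 - iexp (- (\<omega> * t))) * \<Psi> \<omega> \<partial>lborel)"
      by (simp only: mult.commute)
  qed
  also have "\<dots> = (\<integral>t. (\<integral>\<omega>. k t * (F \<omega> * (1 - iexp (- (\<omega> * t))) * \<Psi> \<omega>) \<partial>lborel) \<partial>lborel)"
    by (simp only: integral_mult_right_zero)
  also have "\<dots> = (\<integral>\<omega>. (\<integral>t. k t * (F \<omega> * (1 - iexp (- (\<omega> * t))) * \<Psi> \<omega>) \<partial>lborel) \<partial>lborel)"
    using lborel_pair.Fubini_integral[OF Fubini_t\<omega>] by simp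
  also have "\<dots> = (\<integral>\<omega>. F \<omega> * levy_symbol k \<omega> * \<Psi> \<omega> \<partial>lborel)"
  proof (rule Bochner_Integration.integral_cong[OF refl])
    fix \<omega>
    have "(\<integral>t. k t * (F \<omega> * (1 - iexp (- (\<omega> * t))) * \<Psi> \<omega>) \<partial>lborel)
        = (\<integral>t. (F \<omega> * \<Psi> \<omega>) * ((1 - iexp (- (\<omega> * t))) * k t) \<partial>lborel)"
      by (simp add: mult_ac)
    also have "\<dots> = F \<omega> * \<Psi> \<omega> * levy_symbol k \<omega>"
      unfolding levy_symbol_def by (rule integral_mult_right_zero)
    finally show "(\<integral>t. k t * (F \<omega> * (1 - iexp (- (\<omega> * t))) * \<Psi> \<omega>) \<partial>lborel) = F \<omega> * levy_symbol k \<omega> * \<Psi> \<omega>"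
      by (simp add: mult_ac)
  qed
  finally show ?thesis
    unfolding F_def .
qed

lemma integrable_fourier_levy_symbol_mult:
  assumes \<Psi>: "integrable lborel \<Psi>" and \<Psi>_weighted: "integrable lborel (\<lambda>\<omega>. (2 + \<bar>\<omega>\<bar>) * norm (\<Psi> \<omega>))"
  shows "integrable lborel (\<lambda>\<omega>. fourier (\<lambda>z. complex_of_real (fV (y - z))) \<omega> * levy_symbol k \<omega> * \<Psi> \<omega>)"
proof (rule integrable_real_bound)
  define C where "C = (\<integral>z. norm (complex_of_real (fV (y - z))) \<partial>lborel)"
  define K where "K = (\<integral>t. min 1 t * norm (k t) \<partial>lborel)"
  show "integrable lborel (\<lambda>\<omega>. C * K * ((2 + \<bar>\<omega>\<bar>) * norm (\<Psi> \<omega>)))"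
    using \<Psi>_weighted by simp
  have "norm (fourier (\<lambda>z. complex_of_real (fV (y - z))) \<omega> * levy_symbol k \<omega> * \<Psi> \<omega>)
      \<le> C * ((2 + \<bar>\<omega>\<bar>) * K) * norm (\<Psi> \<omega>)" for \<omega>
    unfolding K_def C_def norm_mult
    by (intro mult_right_mono mult_mono norm_fourier_le norm_levy_symbol_le[OF k_measurable k_nonpos k_integrable])
       (auto intro: integral_nonneg_AE)
  then show "norm (fourier (\<lambda>z. complex_of_real (fV (y - z))) \<omega> * levy_symbol k \<omega> * \<Psi> \<omega>)
      \<le> C * K * ((2 + \<bar>\<omega>\<bar>) * norm (\<Psi> \<omega>))" for \<omega>
    by (simp add: mult_ac)
  have [measurable]: "\<Psi> \<in> borel_measurable borel"
    using \<Psi> by auto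
  show "(\<lambda>\<omega>. fourier (\<lambda>z. complex_of_real (fV (y - z))) \<omega> * levy_symbol k \<omega> * \<Psi> \<omega>) \<in> borel_measurable lborel"
    unfolding levy_symbol_def[abs_def] by measurable
qed

lemma integral_levy_operator_fourier:
  assumes \<Psi>: "integrable lborel \<Psi>" and \<Psi>_weighted: "integrable lborel (\<lambda>\<omega>. (2 + \<bar>\<omega>\<bar>) * norm (\<Psi> \<omega>))"
    and \<Psi>_hat: "integrable lborel (fourier \<Psi>)"
  shows "(\<integral>z. levy_operator fV c k (y - z) * fourier \<Psi> z \<partial>lborel)
       = (\<integral>\<omega>. fourier (\<lambda>z. complex_of_real (fV (y - z))) \<omega> * (c + levy_symbol k \<omega>) * \<Psi> \<omega> \<partial>lborel)"
proof -
  define F where "F = fourier (\<lambda>z. complex_of_real (fV (y - z)))"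
  have [measurable]: "fourier \<Psi> \<in> borel_measurable borel"
    using \<Psi>_hat by auto
  have int_levy_z: "integrable lborel
      (\<lambda>z. fourier \<Psi> z * (\<integral>t. complex_of_real (fV (y - z) - fV (y - z - t)) * k t \<partial>lborel))"
    using \<Psi>_hat _ norm_levy_integral_le by (rule integrable_mult_bounded) measurable
  note int_levy_\<omega> = integrable_fourier_levy_symbol_mult[OF \<Psi> \<Psi>_weighted, folded F_def]
  have "(\<integral>z. levy_operator fV c k (y - z) * fourier \<Psi> z \<partial>lborel)
      = (\<integral>z. c * (complex_of_real (fV (y - z)) * fourier \<Psi> z)
          + fourier \<Psi> z * (\<integral>t. complex_of_real (fV (y - z) - fV (y - z - t)) * k t \<partial>lborel) \<partial>lborel)"
    by (simp add: levy_operator_def algebra_simps)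
  also have "\<dots> = c * (\<integral>z. complex_of_real (fV (y - z)) * fourier \<Psi> z \<partial>lborel)
      + (\<integral>z. (\<integral>t. complex_of_real (fV (y - z) - fV (y - z - t)) * k t \<partial>lborel) * fourier \<Psi> z \<partial>lborel)"
    using integrable_fV_reflect_mult_fourier[OF \<Psi>] int_levy_z by (simp add: mult.commute)
  also have "\<dots> = c * (\<integral>\<omega>. F \<omega> * \<Psi> \<omega> \<partial>lborel) + (\<integral>\<omega>. F \<omega> * levy_symbol k \<omega> * \<Psi> \<omega> \<partial>lborel)"
    unfolding F_def integral_fV_reflect_fourier[OF \<Psi>] integral_levy_part_fourier[OF assms] ..
  also have "\<dots> = (\<integral>\<omega>. F \<omega> * (c + levy_symbol k \<omega>) * \<Psi> \<omega> \<partial>lborel)"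
    using integrable_fourier_fV_reflect_mult[OF \<Psi>, of y] int_levy_\<omega>
    by (simp add: F_def algebra_simps)
  finally show ?thesis
    unfolding F_def .
qed

lemma integral_h_fourier:
  assumes \<Psi>: "integrable lborel \<Psi>" and \<Psi>_weighted: "integrable lborel (\<lambda>\<omega>. (2 + \<bar>\<omega>\<bar>) * norm (\<Psi> \<omega>))"
    and \<Psi>_hat: "integrable lborel (fourier \<Psi>)"
  shows "(\<integral>z. h z * fourier \<Psi> z \<partial>lborel) = (\<integral>z. levy_operator fV c k (y - z) * fourier \<Psi> z \<partial>lborel)"
proof -
  have [measurable]: "\<Psi> \<in> borel_measurable borel"
    using \<Psi> by auto
  have "(\<integral>z. h z * fourier \<Psi> z \<partial>lborel) = (\<integral>\<omega>. fourier h \<omega> * \<Psi> \<omega> \<partial>lborel)"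
    using h_integrable \<Psi> by (rule fourier_multiplication)
  also have "\<dots> = (\<integral>\<omega>. fourier (\<lambda>z. complex_of_real (fV (y - z))) \<omega> * (c + levy_symbol k \<omega>) * \<Psi> \<omega> \<partial>lborel)"
    using fourier_h by (intro integral_cong_AE) (auto simp: levy_symbol_def[abs_def])
  finally show ?thesis
    using integral_levy_operator_fourier[OF assms] by simp
qed

(* Fourier uniqueness, tested against Gaussians of shrinking width centred at z0. *)
lemma h_eq_levy_operator: "h z0 = levy_operator fV c k (y - z0)"
proof -
  have eq: "(\<integral>z. h z * complex_of_real (gauss_kernel (Suc n) z0 z) \<partial>lborel)
      = (\<integral>z. levy_operator fV c k (y - z) * complex_of_real (gauss_kernel (Suc n) z0 z) \<partial>lborel)" for n
  proof -
    have fourier_test: "fourier (gauss_test (Suc n) z0) = (\<lambda>z. complex_of_real (gauss_kernel (Suc n) z0 z))"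
      using fourier_gauss_test[of "Suc n" z0] by auto
    have "integrable lborel (fourier (gauss_test (Suc n) z0))"
      unfolding fourier_test by (rule integrable_of_real[OF integrable_gauss_kernel])
    from integral_h_fourier[OF integrable_gauss_test[of "Suc n" z0] this] show ?thesis
      unfolding fourier_test by simp
  qed
  obtain Bh where Bh: "\<And>x. norm (h x) \<le> Bh"
    using h_Xi0 bounded_if_tendsto_0_at_infinity[OF h_continuous] unfolding Xi0_def by blast
  have "(\<lambda>n. \<integral>z. h z * complex_of_real (gauss_kernel (Suc n) z0 z) \<partial>lborel) \<longlonglongrightarrow> h z0"
    using h_measurable Bh by (rule gauss_kernel_approx_identity)
      (use h_continuous in \<open>simp add: continuous_on_eq_continuous_at\<close>)
  then have "(\<lambda>n. \<integral>z. levy_operator fV c k (y - z) * complex_of_real (gauss_kernel (Suc n) z0 z) \<partial>lborel)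
      \<longlonglongrightarrow> h z0"
    by (simp only: eq)
  moreover have "(\<lambda>n. \<integral>z. levy_operator fV c k (y - z) * complex_of_real (gauss_kernel (Suc n) z0 z) \<partial>lborel)
      \<longlonglongrightarrow> levy_operator fV c k (y - z0)"
  proof (rule gauss_kernel_approx_identity)
    have "continuous_on UNIV (\<lambda>z. levy_operator fV c k (y - z))"
      by (rule continuous_on_compose2[OF continuous_levy_operator continuous_on_op_minus]) simp
    then show "isCont (\<lambda>z. levy_operator fV c k (y - z)) z0"
      by (simp add: continuous_on_eq_continuous_at)
    show "norm (levy_operator fV c k (y - z)) \<le> norm c * B + (2 * B + L) * (\<integral>t. min 1 t * norm (k t) \<partial>lborel)"
      for z by (rule norm_levy_operator_le)
  qed measurable
  ultimately show ?thesis
    by (rule LIMSEQ_unique)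
qed

lemma integrable_levy_integrand_pair:
  fixes \<mu> :: "real measure"
  assumes sets_\<mu>: "sets \<mu> = sets borel" and "finite_measure \<mu>"
  shows "integrable (\<mu> \<Otimes>\<^sub>M lborel) (\<lambda>(z, t). complex_of_real (fV (y - z) - fV (y - z - t)) * k t)"
proof -
  interpret \<mu>: finite_measure \<mu> by fact
  interpret pair_sigma_finite \<mu> lborel
    by (simp add: pair_sigma_finite_def \<mu>.sigma_finite_measure_axioms sigma_finite_lborel)
  have [measurable_cong]: "sets \<mu> = sets borel"
    by (rule sets_\<mu>)
  have "(\<lambda>(z, t). complex_of_real (fV (y - z) - fV (y - z - t)) * k t) \<in> borel_measurable (\<mu> \<Otimes>\<^sub>M lborel)"
    by measurable
  then show ?thesis
    by (rule integrable_product_bound[where a="\<lambda>_. 1" and b="\<lambda>t. (2 * B + L) * (min 1 t * norm (k t))"])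
       (use k_integrable levy_integrand_le in \<open>auto simp del: of_real_diff\<close>)
qed

lemma
  fixes \<mu> :: "real measure"
  assumes sets_\<mu>: "sets \<mu> = sets borel" and "finite_measure \<mu>"
  shows integral_h_finite_measure: "(\<integral>x. h x \<partial>\<mu>) = levy_operator (\<lambda>a. \<integral>z. fV (a - z) \<partial>\<mu>) c k y"
    and integrable_levy_integrand_convolution:
      "integrable lborel (\<lambda>t. complex_of_real ((\<integral>z. fV (y - z) \<partial>\<mu>) - (\<integral>z. fV (y - t - z) \<partial>\<mu>)) * k t)"
proof -
  interpret \<mu>: finite_measure \<mu> by fact
  interpret pair_sigma_finite \<mu> lborel
    by (simp add: pair_sigma_finite_def \<mu>.sigma_finite_measure_axioms sigma_finite_lborel)
  have [measurable_cong]: "sets \<mu> = sets borel"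
    by (rule sets_\<mu>)
  have integrable_fV: "integrable \<mu> (\<lambda>z. fV (a - z))" for a
    by (rule \<mu>.integrable_const_bound[where B=B]) (use fV_bounded in auto)
  define H where "H = (\<lambda>(z, t). complex_of_real (fV (y - z) - fV (y - z - t)) * k t)"
  have H_integrable: "integrable (\<mu> \<Otimes>\<^sub>M lborel) H"
    unfolding H_def using assms by (rule integrable_levy_integrand_pair)
  have H_integral_\<mu>: "(\<integral>z. H (z, t) \<partial>\<mu>)
      = complex_of_real ((\<integral>z. fV (y - z) \<partial>\<mu>) - (\<integral>z. fV (y - t - z) \<partial>\<mu>)) * k t" for t
  proof -
    have swap: "y - z - t = y - t - z" for z
      by simp
    have "(\<integral>z. H (z, t) \<partial>\<mu>) = (\<integral>z. complex_of_real (fV (y - z) - fV (y - t - z)) \<partial>\<mu>) * k t"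
      by (simp add: H_def swap del: of_real_diff)
    also have "\<dots> = complex_of_real ((\<integral>z. fV (y - z) \<partial>\<mu>) - (\<integral>z. fV (y - t - z) \<partial>\<mu>)) * k t"
      using integrable_fV by simp
    finally show ?thesis .
  qed
  show "integrable lborel (\<lambda>t. complex_of_real ((\<integral>z. fV (y - z) \<partial>\<mu>) - (\<integral>z. fV (y - t - z) \<partial>\<mu>)) * k t)"
    using integrable_snd[of "\<lambda>z t. H (z, t)"] H_integrable by (simp add: H_integral_\<mu>)
  have "(\<integral>x. h x \<partial>\<mu>) = (\<integral>z. c * complex_of_real (fV (y - z)) + (\<integral>t. H (z, t) \<partial>lborel) \<partial>\<mu>)"
    using h_eq_levy_operator by (simp add: levy_operator_def H_def del: of_real_diff)
  also have "\<dots> = c * complex_of_real (\<integral>z. fV (y - z) \<partial>\<mu>) + (\<integral>z. (\<integral>t. H (z, t) \<partial>lborel) \<partial>\<mu>)"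
    using integrable_fV[of y] integrable_fst[of "\<lambda>z t. H (z, t)"] H_integrable by simp
  also have "(\<integral>z. (\<integral>t. H (z, t) \<partial>lborel) \<partial>\<mu>) = (\<integral>t. (\<integral>z. H (z, t) \<partial>\<mu>) \<partial>lborel)"
    using Fubini_integral[of "\<lambda>z t. H (z, t)"] H_integrable by simp
  finally show "(\<integral>x. h x \<partial>\<mu>) = levy_operator (\<lambda>a. \<integral>z. fV (a - z) \<partial>\<mu>) c k y"
    by (simp add: H_integral_\<mu> levy_operator_def)
qed

lemma integral_h_signed_measure:
  fixes \<mu>1 \<mu>2 :: "real measure"
  assumes "sets \<mu>1 = sets borel" "finite_measure \<mu>1" "sets \<mu>2 = sets borel" "finite_measure \<mu>2"
  shows "(\<integral>x. h x \<partial>\<mu>1) - (\<integral>x. h x \<partial>\<mu>2) = levy_operator (conv_signed fV \<mu>1 \<mu>2) c k y"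
  using integral_h_finite_measure[OF assms(1,2)] integral_h_finite_measure[OF assms(3,4)]
    levy_operator_diff[OF integrable_levy_integrand_convolution[OF assms(1,2)]
      integrable_levy_integrand_convolution[OF assms(3,4)]]
  by (simp add: conv_signed_def[abs_def])

end

section \<open>The probabilistic setting\<close>

lemma C0_1_bounded_lipschitz:
  assumes "C0_1 f"
  obtains B L where "\<And>x. \<bar>f x\<bar> \<le> B" and "\<And>a b. \<bar>f a - f b\<bar> \<le> L * \<bar>a - b\<bar>"
proof -
  obtain f' where der: "\<And>x. (f has_real_derivative f' x) (at x)" and "continuous_on UNIV f'"
    and "(f \<longlongrightarrow> 0) at_infinity" and "(f' \<longlongrightarrow> 0) at_infinity"
    using assms unfolding C0_1_def by blast
  moreover have "continuous_on UNIV f"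
    by (intro continuous_at_imp_continuous_on ballI DERIV_isCont[OF der])
  ultimately obtain B L where B: "\<And>x. \<bar>f x\<bar> \<le> B" and L: "\<And>x. \<bar>f' x\<bar> \<le> L"
    using bounded_if_tendsto_0_at_infinity by (metis real_norm_def)
  have "\<bar>f a - f b\<bar> \<le> L * \<bar>a - b\<bar>" for a b
    using field_differentiable_bound[OF convex_UNIV, of f f' L a b] der L by simp
  with B show ?thesis by (rule that)
qed

lemma (in prob_space) distributed_density_fourier:
  assumes V: "distributed M lborel V (\<lambda>x. ennreal (f x))" and f_nonneg: "\<And>x. 0 \<le> f x"
  shows "char (distr M borel V) = fourier (\<lambda>x. complex_of_real (f x))"
    and "integrable lborel f"
proof -
  have [measurable]: "f \<in> borel_measurable borel"
    using distributed_real_measurable[OF _ V] f_nonneg by simp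
  have "distr M borel V = distr M lborel V"
    by (rule distr_cong) auto
  also have "\<dots> = density lborel (\<lambda>x. ennreal (f x))"
    using V by (rule distributed_distr_eq_density)
  finally have distr_V: "distr M borel V = density lborel (\<lambda>x. ennreal (f x))" .
  show "char (distr M borel V) = fourier (\<lambda>x. complex_of_real (f x))"
    unfolding char_def[abs_def] fourier_def[abs_def] distr_V
    by (subst integral_density) (auto simp: f_nonneg scaleR_conv_of_real mult.commute)
  have "prob_space (density lborel (\<lambda>x. ennreal (f x)))"
    unfolding distr_V[symmetric] using distributed_measurable[OF V] by (intro prob_space_distr) simp
  then have "integrable (density lborel (\<lambda>x. ennreal (f x))) (\<lambda>_. 1::real)"
    by (simp add: prob_space.finite_measure finite_measure.integrable_const)
  then show "integrable lborel f"
    by (subst (asm) integrable_density) (auto simp: f_nonneg)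
qed

lemma integrable_min_one_mult_norm:
  fixes k :: "real \<Rightarrow> complex"
  assumes k: "set_borel_measurable lborel {0<..} k"
    and near_0: "(\<integral>\<^sup>+ t. ennreal (indicator {0<..1} t * (t * cmod (k t))) \<partial>lborel) < \<infinity>"
    and near_infinity: "(\<integral>\<^sup>+ t. ennreal (indicator {1..} t * cmod (k t)) \<partial>lborel) < \<infinity>"
  shows "integrable lborel (\<lambda>t. min 1 t * norm (indicator {0<..} t *\<^sub>R k t))"
proof -
  define k' where "k' t = indicator {0<..} t *\<^sub>R k t" for t
  have [measurable]: "k' \<in> borel_measurable borel"
    using k unfolding set_borel_measurable_def k'_def[abs_def] by simp
  have "integrable lborel (\<lambda>t. indicator {0<..1} t * (t * norm (k' t)))"
  proof (rule integrableI_nonneg)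
    have "(\<integral>\<^sup>+ t. ennreal (indicator {0<..1} t * (t * norm (k' t))) \<partial>lborel)
        = (\<integral>\<^sup>+ t. ennreal (indicator {0<..1} t * (t * cmod (k t))) \<partial>lborel)"
      by (intro nn_integral_cong) (auto simp: k'_def indicator_def)
    then show "(\<integral>\<^sup>+ t. ennreal (indicator {0<..1} t * (t * norm (k' t))) \<partial>lborel) < \<infinity>"
      using near_0 by simp
  qed (auto intro!: AE_I2 simp: indicator_def)
  moreover have "integrable lborel (\<lambda>t. indicator {1..} t * norm (k' t))"
  proof (rule integrableI_nonneg)
    have "(\<integral>\<^sup>+ t. ennreal (indicator {1..} t * norm (k' t)) \<partial>lborel)
        = (\<integral>\<^sup>+ t. ennreal (indicator {1..} t * cmod (k t)) \<partial>lborel)"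
      by (intro nn_integral_cong) (auto simp: k'_def indicator_def)
    then show "(\<integral>\<^sup>+ t. ennreal (indicator {1..} t * norm (k' t)) \<partial>lborel) < \<infinity>"
      using near_infinity by simp
  qed (auto intro!: AE_I2 simp: indicator_def)
  ultimately have "integrable lborel (\<lambda>t. min 1 t * norm (k' t))"
  proof (rule Bochner_Integration.integrable_bound[OF Bochner_Integration.integrable_add])
    show "AE t in lborel. norm (min 1 t * norm (k' t))
        \<le> norm (indicator {0<..1} t * (t * norm (k' t)) + indicator {1..} t * norm (k' t))"
      by (intro AE_I2) (auto simp: k'_def indicator_def)
  qed measurable
  then show ?thesis
    by (simp add: k'_def)
qed

lemma fourier_lam_eq_from_Qfun:
  assumes char_PV: "char PV = fourier (\<lambda>x. complex_of_real (fV x))"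
    and char_nonzero: "AE \<omega> in lborel. char PV \<omega> \<noteq> 0"
    and Q: "AE \<omega> in lborel. Qfun g fV PV y \<omega> =
           iexp (\<omega> * y) * (c + (LINT t:{0<..}|lborel. (1 - iexp (- (\<omega> * t))) * k t))"
  shows "AE \<omega> in lborel. fourier (lam g fV y) \<omega> = fourier (\<lambda>z. complex_of_real (fV (y - z))) \<omega>
           * (c + levy_symbol (\<lambda>t. indicator {0<..} t *\<^sub>R k t) \<omega>)"
  using AE_lborel_uminus[OF char_nonzero] Q
proof eventually_elim
  case (elim \<omega>)
  have "levy_symbol (\<lambda>t. indicator {0<..} t *\<^sub>R k t) \<omega> = (LINT t:{0<..}|lborel. (1 - iexp (- (\<omega> * t))) * k t)"
    unfolding levy_symbol_def set_lebesgue_integral_def by (simp add: mult.left_commute)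
  moreover have "fourier (\<lambda>z. complex_of_real (fV (y - z))) \<omega> = iexp (\<omega> * y) * char PV (- \<omega>)"
    unfolding char_PV by (rule fourier_reflect_shift)
  ultimately show ?case
    using elim by (simp add: Qfun_def field_simps)
qed

lemma conv_signed_null_measure: "conv_signed fV \<mu> (null_measure borel) = fY fV \<mu>"
  by (simp add: conv_signed_def fY_def fun_eq_iff)

lemma cond_exp_at_eq_T_functional:
  "complex_of_real (cond_exp_at g fV PX y)
    = complex_of_real (1 / fY fV PX y) * T_functional g fV y PX (null_measure borel)"
  by (simp add: cond_exp_at_def T_functional_def lam_def divide_inverse del: of_real_mult)
     (simp only: of_real_mult of_real_inverse)

theorem proposition9:
  fixes M :: "'s measure" and X V :: "'s \<Rightarrow> real"
    and y :: real and g fV :: "real \<Rightarrow> real"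
    and c :: complex and k :: "real \<Rightarrow> complex"
  assumes "prob_space M"
    and "g \<in> borel_measurable borel"
    and "random_variable_indep": "prob_space.indep_var M borel X borel V"
    and "X \<in> borel_measurable M" and "V \<in> borel_measurable M"
    and "\<forall>x. fV x \<ge> 0"
    and "distributed M lborel V (\<lambda>x. ennreal (fV x))"
    and "C0_1 fV"
    and "AE \<omega> in lborel. char (distr M borel V) \<omega> \<noteq> 0"
    and "Xi0 (lam g fV y)"
    and "integrable lborel (fourier (lam g fV y))"
    and "set_borel_measurable lborel {0<..} k"
    and "(\<integral>\<^sup>+ t. ennreal (indicator {0<..1} t * (t * cmod (k t))) \<partial>lborel) < \<infinity>"
    and "(\<integral>\<^sup>+ t. ennreal (indicator {1..} t * cmod (k t)) \<partial>lborel) < \<infinity>"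
    and "AE \<omega> in lborel. Qfun g fV (distr M borel V) y \<omega> =
           iexp (\<omega> * y) * (c + (LINT t:{0<..}|lborel. (1 - iexp (- (\<omega> * t))) * k t))"
  shows "(\<forall>\<mu>1 \<mu>2 :: real measure.
            sets \<mu>1 = sets borel \<longrightarrow> sets \<mu>2 = sets borel \<longrightarrow>
            finite_measure \<mu>1 \<longrightarrow> finite_measure \<mu>2 \<longrightarrow>
            T_functional g fV y \<mu>1 \<mu>2 =
              c * complex_of_real (conv_signed fV \<mu>1 \<mu>2 y)
              + (LINT t:{0<..}|lborel.
                   complex_of_real (conv_signed fV \<mu>1 \<mu>2 y - conv_signed fV \<mu>1 \<mu>2 (y - t)) * k t))
       \<and> (fY fV (distr M borel X) y > 0 \<longrightarrow>
            complex_of_real (cond_exp_at g fV (distr M borel X) y) =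
              complex_of_real (1 / fY fV (distr M borel X) y) *
                (c * complex_of_real (fY fV (distr M borel X) y)
                 + (LINT t:{0<..}|lborel.
                      complex_of_real (fY fV (distr M borel X) y - fY fV (distr M borel X) (y - t)) * k t)))"
proof -
  interpret prob_space M by fact
  define k' where "k' = (\<lambda>t. indicator {0<..} t *\<^sub>R k t)"
  obtain B L where "\<And>x. \<bar>fV x\<bar> \<le> B" "\<And>a b. \<bar>fV a - fV b\<bar> \<le> L * \<bar>a - b\<bar>"
    using C0_1_bounded_lipschitz[OF \<open>C0_1 fV\<close>] by blast
  moreover have char_V: "char (distr M borel V) = fourier (\<lambda>x. complex_of_real (fV x))"
    and "integrable lborel fV"
    using distributed_density_fourier assms(6,7) by auto
  ultimately interpret levy_fourier_identity fV B L k' "lam g fV y" y c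
    using assms(10,12) integrable_min_one_mult_norm[OF assms(12-14)]
      fourier_lam_eq_from_Qfun[OF char_V assms(9,15)]
    by unfold_locales (auto simp: k'_def set_borel_measurable_def)
  have T: "T_functional g fV y \<mu>1 \<mu>2 = c * complex_of_real (conv_signed fV \<mu>1 \<mu>2 y)
      + (LINT t:{0<..}|lborel. complex_of_real (conv_signed fV \<mu>1 \<mu>2 y - conv_signed fV \<mu>1 \<mu>2 (y - t)) * k t)"
    if "sets \<mu>1 = sets borel" "sets \<mu>2 = sets borel" "finite_measure \<mu>1" "finite_measure \<mu>2"
    for \<mu>1 \<mu>2 :: "real measure"
    using integral_h_signed_measure[of \<mu>1 \<mu>2] that
    by (simp add: T_functional_def k'_def levy_operator_restrict)
  have "finite_measure (distr M borel X)"
    using \<open>X \<in> borel_measurable M\<close> by (rule finite_measure_distr)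
  then have "T_functional g fV y (distr M borel X) (null_measure borel)
      = c * complex_of_real (fY fV (distr M borel X) y)
        + (LINT t:{0<..}|lborel. complex_of_real (fY fV (distr M borel X) y - fY fV (distr M borel X) (y - t)) * k t)"
    using T[of "distr M borel X" "null_measure borel"]
    by (simp add: conv_signed_null_measure finite_measureI)
  then show ?thesis
    using T by (simp add: cond_exp_at_eq_T_functional)
qed

end
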